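(* Let $T\subseteq V_n$ with $|T|$ even, and let $V_n = U_1\cup U_2$ be a partition with $|T\cap U_1|$ and $|T\cap U_2|$ odd. Fix $t_1\in T\cap U_1$, $t_2\in T\cap U_2$, and set $V_i := U_i\setminus\{t_i\}$, $T_i := (T\cap U_i)\setminus\{t_i\}$ for $i=1,2$, and $F := (V_1:V_2)\cup(V_1:\{t_1,t_2\})\cup(V_2:\{t_1,t_2\})$. Then $$Q := \{x\in \operatorname{dom}(P_{T\text{-join}}(n)) : x(U_1:U_2)=1,\ x_e=0\ \forall e\in F\}$$ is a face of $\{x\in \operatorname{dom}(P_{T\text{-join}}(n)) : x(U_1:U_2)=1\}$ and equals the set of $x\in\mathbb{R}^{E_n}_+$ with $x_{\{t_1,t_2\}}=1$, $x_e=0$ for all $e\in F$, and $x(S_i:(V_i\setminus S_i))\ge 1$ for all $i\in\{1,2\}$ and all $S_i\subseteq V_i$ with $|T_i\cap S_i|$ odd. Consequently $Q$ is (up to coordinate permutation) the Cartesian product of the $T_1$-join polyhedron of the complete graph on $V_1$, the $T_2$-join polyhedron of the complete graph on $V_2$, and a single point.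
   Context: $K_n=(V_n,E_n)$ is the complete graph on $n$ nodes. For $A,B\subseteq V_n$, $A:B := \{\{a,b\} : a\in A, b\in B\}$, and $x(F')=\sum_{e\in F'}x_e$. For $T\subseteq V_n$ with $|T|$ even, a $T$-join is a set $J\subseteq E_n$ such that a node has odd degree in $(V_n,J)$ iff it lies in $T$; $P_{T\text{-join}}(n)$ is the convex hull of characteristic vectors of $T$-joins and $\operatorname{dom}(P_{T\text{-join}}(n)) = P_{T\text{-join}}(n)+\mathbb{R}^{E_n}_+ = \{x\in\mathbb{R}^{E_n}_+ : x(\delta(S))\ge 1 \text{ for all } S\subseteq V_n \text{ with } |S\cap T| \text{ odd}\}$, where $\delta(S)=S:(V_n\setminus S)$. The $T'$-join polyhedron of a complete graph on a node set $W$ with $T'\subseteq W$ is defined analogously. *)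

theory Defs
  imports "HOL-Analysis.Analysis"
begin

text \<open>Nodes of K_n are 0..n-1; an edge is a 2-element set of nodes.
  A vector in R^{E} is a function x :: nat set => real which vanishes outside E.\<close>

definition nodes :: "nat \<Rightarrow> nat set" where
  "nodes n = {0..<n}"

definition edges :: "nat set \<Rightarrow> nat set set" where
  "edges W = {{a, b} | a b. a \<in> W \<and> b \<in> W \<and> a \<noteq> b}"

definition ecut :: "nat set \<Rightarrow> nat set \<Rightarrow> nat set set" where
  "ecut A B = {{a, b} | a b. a \<in> A \<and> b \<in> B \<and> a \<noteq> b}"

definition xsum :: "(nat set \<Rightarrow> real) \<Rightarrow> nat set set \<Rightarrow> real" where
  "xsum x F = (\<Sum>e\<in>F. x e)"

definition delta :: "nat set \<Rightarrow> nat set \<Rightarrow> nat set set" where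
  "delta W S = ecut S (W - S)"

definition vecs :: "nat set \<Rightarrow> (nat set \<Rightarrow> real) set" where
  "vecs W = {x. \<forall>e. e \<notin> edges W \<longrightarrow> x e = 0}"

text \<open>The dominant of the T-join polytope of the complete graph on W,
  via its inequality description (as given in the context).\<close>
definition dom_Tjoin :: "nat set \<Rightarrow> nat set \<Rightarrow> (nat set \<Rightarrow> real) set" where
  "dom_Tjoin W T = {x \<in> vecs W. (\<forall>e\<in>edges W. x e \<ge> 0) \<and>
      (\<forall>S. S \<subseteq> W \<and> odd (card (S \<inter> T)) \<longrightarrow> xsum x (delta W S) \<ge> 1)}"

definition is_face :: "nat set set \<Rightarrow> (nat set \<Rightarrow> real) set \<Rightarrow> (nat set \<Rightarrow> real) set \<Rightarrow> bool" where
  "is_face E F P \<longleftrightarrow> (\<exists>c d. (\<forall>x\<in>P. (\<Sum>e\<in>E. c e * x e) \<ge> d) \<and>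
      F = {x \<in> P. (\<Sum>e\<in>E. c e * x e) = d})"

definition Fset :: "nat set \<Rightarrow> nat set \<Rightarrow> nat \<Rightarrow> nat \<Rightarrow> nat set set" where
  "Fset U1 U2 t1 t2 = ecut (U1 - {t1}) (U2 - {t2}) \<union> ecut (U1 - {t1}) {t1, t2}
      \<union> ecut (U2 - {t2}) {t1, t2}"

end

theory Submission
  imports Defs
begin

text \<open>
  On P all coordinates in F are nonnegative, so Q, where they all vanish, is the face cut out
  by the valid inequality x(F) \<ge> 0. Once x vanishes on F, the only edge of U1:U2 that can
  carry weight is t1t2, so x(U1:U2) = 1 becomes x_{t1t2} = 1, and x(\<delta>(S)) = x(S:(V_i - S))
  for every S inside V_i. Conversely, an odd cut S of K_n either separates t1 from t2, and then
  contains t1t2, or, as t1, t2 \<in> T, meets T1 or T2 in an odd set, and then \<delta>(S) contains the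
  corresponding cut of V1 or V2. A vector vanishing on F is supported on E(V1) \<union> E(V2) \<union> {t1t2},
  which gives the product decomposition.
\<close>

lemma mem_ecut: "e \<in> ecut A B \<longleftrightarrow> (\<exists>a b. e = {a, b} \<and> a \<in> A \<and> b \<in> B \<and> a \<noteq> b)"
  by (auto simp: ecut_def)

lemma edges_eq_ecut: "edges W = ecut W W"
  by (simp add: edges_def ecut_def)

lemma ecut_commute: "ecut A B = ecut B A"
  by (auto simp: ecut_def insert_commute)

lemma ecut_mono: "A \<subseteq> A' \<Longrightarrow> B \<subseteq> B' \<Longrightarrow> ecut A B \<subseteq> ecut A' B'"
  by (auto simp: ecut_def)

lemma ecut_subset_Pow: "ecut A B \<subseteq> Pow (A \<union> B)"
  by (auto simp: ecut_def)

lemma finite_ecut: "finite A \<Longrightarrow> finite B \<Longrightarrow> finite (ecut A B)"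
  by (meson ecut_subset_Pow finite_Pow_iff finite_UnI finite_subset)

lemma ecut_subset_edges: "A \<subseteq> W \<Longrightarrow> B \<subseteq> W \<Longrightarrow> ecut A B \<subseteq> edges W"
  unfolding edges_eq_ecut by (rule ecut_mono)

lemma finite_edges: "finite W \<Longrightarrow> finite (edges W)"
  by (simp add: edges_eq_ecut finite_ecut)

lemma edges_mono: "V \<subseteq> W \<Longrightarrow> edges V \<subseteq> edges W"
  by (simp add: ecut_mono edges_eq_ecut)

lemma subset_of_mem_edges: "e \<in> edges V \<Longrightarrow> e \<subseteq> V"
  by (auto simp: edges_def)

lemma edge_nonempty: "e \<in> edges V \<Longrightarrow> e \<noteq> {}"
  by (auto simp: edges_def)

lemma mem_edges_subset: "e \<in> edges W \<Longrightarrow> e \<subseteq> V \<Longrightarrow> e \<in> edges V"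
  by (auto simp: edges_def)

lemma Fset_swap: "Fset U2 U1 t2 t1 = Fset U1 U2 t1 t2"
  unfolding Fset_def by (auto simp: ecut_commute insert_commute)

lemma delta_subset_edges: "S \<subseteq> W \<Longrightarrow> delta W S \<subseteq> edges W"
  unfolding delta_def by (rule ecut_subset_edges) auto

lemma finite_delta: "finite W \<Longrightarrow> S \<subseteq> W \<Longrightarrow> finite (delta W S)"
  using delta_subset_edges finite_edges finite_subset by metis

lemma xsum_mono:
  assumes "finite G" "H \<subseteq> G" "\<forall>e\<in>G. 0 \<le> x e"
  shows "xsum x H \<le> xsum x G"
  unfolding xsum_def using assms by (intro sum_mono2) auto

lemma xsum_mono_neutral:
  assumes "finite G" "H \<subseteq> G" "\<forall>e\<in>G - H. x e = 0"
  shows "xsum x H = xsum x G"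
  unfolding xsum_def using assms by (intro sum.mono_neutral_left) auto

lemma xsum_cong: "(\<And>e. e \<in> G \<Longrightarrow> x e = y e) \<Longrightarrow> xsum x G = xsum y G"
  unfolding xsum_def by (rule sum.cong) auto

lemma xsum_le_delta:
  assumes "finite W" "S \<subseteq> W" "\<forall>e\<in>edges W. 0 \<le> x e" "G \<subseteq> delta W S"
  shows "xsum x G \<le> xsum x (delta W S)"
proof (rule xsum_mono)
  show "finite (delta W S)"
    using assms(1,2) by (rule finite_delta)
  show "\<forall>e\<in>delta W S. 0 \<le> x e"
    using assms(2,3) delta_subset_edges by blast
qed (fact assms(4))

lemma is_face_vanishing:
  assumes "finite E" "F \<subseteq> E" "\<forall>x\<in>P. \<forall>e\<in>F. 0 \<le> x e"
  shows "is_face E {x \<in> P. \<forall>e\<in>F. x e = 0} P"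
proof -
  define c :: "nat set \<Rightarrow> real" where "c e = (if e \<in> F then 1 else 0)" for e
  have sum_c: "(\<Sum>e\<in>E. c e * x e) = sum x F" for x
  proof -
    have "(\<Sum>e\<in>E. c e * x e) = (\<Sum>e\<in>E. if e \<in> F then x e else 0)"
      by (intro sum.cong) (auto simp: c_def)
    also have "\<dots> = sum x F"
      using assms(1,2) by (simp add: sum.inter_restrict[symmetric] Int_absorb1)
    finally show ?thesis .
  qed
  have "finite F"
    using assms(1,2) by (rule finite_subset[rotated])
  then have vanishing_iff: "sum x F = 0 \<longleftrightarrow> (\<forall>e\<in>F. x e = 0)" if "x \<in> P" for x
    using assms(3) that by (simp add: sum_nonneg_eq_0_iff)
  show ?thesis unfolding is_face_def
  proof (intro exI conjI)
    show "\<forall>x\<in>P. 0 \<le> (\<Sum>e\<in>E. c e * x e)"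
      using assms(3) by (simp add: sum_c sum_nonneg)
    show "{x \<in> P. \<forall>e\<in>F. x e = 0} = {x \<in> P. (\<Sum>e\<in>E. c e * x e) = 0}"
      using vanishing_iff by (auto simp: sum_c)
  qed
qed

lemma dom_Tjoin_nonneg: "y \<in> dom_Tjoin V T \<Longrightarrow> 0 \<le> y e"
  unfolding dom_Tjoin_def vecs_def by (cases "e \<in> edges V") auto

definition restrict_edges :: "nat set \<Rightarrow> (nat set \<Rightarrow> real) \<Rightarrow> nat set \<Rightarrow> real" where
  "restrict_edges V x e = (if e \<in> edges V then x e else 0)"

lemma restrict_edges_eqI:
  "y \<in> vecs V \<Longrightarrow> (\<And>e. e \<in> edges V \<Longrightarrow> x e = y e) \<Longrightarrow> restrict_edges V x = y"
  by (auto simp: restrict_edges_def vecs_def)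

lemma restrict_edges_in_dom_Tjoin_iff:
  "restrict_edges V x \<in> dom_Tjoin V T \<longleftrightarrow> (\<forall>e\<in>edges V. 0 \<le> x e)
     \<and> (\<forall>S. S \<subseteq> V \<and> odd (card (T \<inter> S)) \<longrightarrow> 1 \<le> xsum x (ecut S (V - S)))"
proof -
  have "xsum (restrict_edges V x) (delta V S) = xsum x (ecut S (V - S))" if "S \<subseteq> V" for S
    using ecut_subset_edges[of S V "V - S"] that unfolding delta_def
    by (intro xsum_cong) (auto simp: restrict_edges_def)
  then show ?thesis
    by (auto simp: dom_Tjoin_def vecs_def restrict_edges_def Int_commute)
qed

definition glue :: "nat set \<Rightarrow> (nat set \<Rightarrow> real) \<Rightarrow> (nat set \<Rightarrow> real) \<Rightarrow> nat set \<Rightarrow> real" where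
  "glue e0 y1 y2 e = y1 e + y2 e + (if e = e0 then 1 else 0)"

lemma glue_eq_0:
  assumes "y \<in> vecs V" "z \<in> vecs V'" "e \<notin> edges V" "e \<notin> edges V'" "e \<noteq> e0"
  shows "glue e0 y z e = 0"
  using assms by (simp add: glue_def vecs_def)

lemma restrict_edges_glue:
  assumes "y \<in> vecs V" "\<forall>e\<in>edges V. z e = 0" "e0 \<notin> edges V"
  shows "restrict_edges V (glue e0 y z) = y" "restrict_edges V (glue e0 z y) = y"
  using assms by (auto intro!: restrict_edges_eqI simp: glue_def)

lemma card_Int_remove:
  assumes "finite A" "a \<in> A"
  shows "card (A \<inter> S) = card ((A - {a}) \<inter> S) + of_bool (a \<in> S)"
proof (cases "a \<in> S")
  case True
  then have "A \<inter> S = insert a ((A - {a}) \<inter> S)"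
    using assms(2) by blast
  then show ?thesis
    using True assms(1) by simp
next
  case False
  then have "A \<inter> S = (A - {a}) \<inter> S"
    by blast
  then show ?thesis
    using False by simp
qed

locale shore_split =
  fixes W T U1 U2 V1 V2 T1 T2 :: "nat set" and t1 t2 :: nat and F :: "nat set set"
  assumes finite_W: "finite W" and T_subset_W: "T \<subseteq> W"
    and shores_cover: "U1 \<union> U2 = W" and shores_disjoint: "U1 \<inter> U2 = {}"
    and t1_mem: "t1 \<in> T \<inter> U1" and t2_mem: "t2 \<in> T \<inter> U2"
    and V1_eq: "V1 = U1 - {t1}" and V2_eq: "V2 = U2 - {t2}"
    and T1_eq: "T1 = T \<inter> U1 - {t1}" and T2_eq: "T2 = T \<inter> U2 - {t2}"
    and F_eq: "F = Fset U1 U2 t1 t2"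
begin

lemma swap_shores: "shore_split W T U2 U1 V2 V1 T2 T1 t2 t1 F"
  by unfold_locales
    (use finite_W T_subset_W shores_cover shores_disjoint t1_mem t2_mem V1_eq V2_eq T1_eq T2_eq
      F_eq Fset_swap in auto)

lemma t1_neq_t2: "t1 \<noteq> t2"
  using shores_disjoint t1_mem t2_mem by blast

lemma V1_subset_W: "V1 \<subseteq> W"
  using shores_cover V1_eq by blast

lemma W_eq_parts: "W = V1 \<union> V2 \<union> {t1, t2}"
  using shores_cover t1_mem t2_mem V1_eq V2_eq by blast

lemma parts_disjoint: "V1 \<inter> V2 = {}" "t1 \<notin> V1" "t1 \<notin> V2" "t2 \<notin> V1" "t2 \<notin> V2"
  using shores_disjoint t1_mem t2_mem V1_eq V2_eq by auto

lemma mem_F_iff: "e \<in> F \<longleftrightarrow> e \<in> edges W \<and> \<not> e \<subseteq> V1 \<and> \<not> e \<subseteq> V2 \<and> e \<noteq> {t1, t2}"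
  unfolding F_eq Fset_def V1_eq[symmetric] V2_eq[symmetric] edges_eq_ecut mem_ecut Un_iff
  using W_eq_parts parts_disjoint t1_neq_t2 by auto

lemma terminal_edge_in_ecut: "{t1, t2} \<in> ecut U1 U2"
  unfolding mem_ecut using t1_mem t2_mem t1_neq_t2 by blast

lemma terminal_edge_in_edges: "{t1, t2} \<in> edges W"
  using terminal_edge_in_ecut ecut_subset_edges[of U1 W U2] shores_cover by blast

lemma terminal_edge_notin_edges_V1: "{t1, t2} \<notin> edges V1"
  using subset_of_mem_edges[of "{t1, t2}" V1] parts_disjoint by blast

lemma terminal_edge_notin_F: "{t1, t2} \<notin> F"
  by (simp add: mem_F_iff)

lemma edges_V1_V2_disjoint: "e \<in> edges V1 \<Longrightarrow> e \<notin> edges V2"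
proof
  assume "e \<in> edges V1" "e \<in> edges V2"
  then have "e \<subseteq> V1 \<inter> V2" "e \<noteq> {}"
    by (simp_all add: subset_of_mem_edges edge_nonempty)
  then show False
    using parts_disjoint(1) by blast
qed

lemma F_disjoint_edges_V1: "e \<in> edges V1 \<Longrightarrow> e \<notin> F"
  using subset_of_mem_edges[of e V1] mem_F_iff[of e] by blast

lemma F_subset_edges: "F \<subseteq> edges W"
  using mem_F_iff by blast

lemma edges_W_cases:
  assumes "e \<in> edges W"
  obtains "e \<in> edges V1" | "e \<in> edges V2" | "e = {t1, t2}" | "e \<in> F"
proof -
  consider "e \<subseteq> V1" | "e \<subseteq> V2" | "e = {t1, t2}" | "e \<in> F"
    using assms mem_F_iff[of e] by blast
  then show thesis
    using assms mem_edges_subset[of e W] that by metis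
qed

lemma ecut_shores_subset: "ecut U1 U2 \<subseteq> insert {t1, t2} F"
proof
  fix e assume e: "e \<in> ecut U1 U2"
  then have "e \<in> edges W"
    using ecut_subset_edges[of U1 W U2] shores_cover by blast
  obtain a b where "e = {a, b}" "a \<in> U1" "b \<in> U2"
    using e unfolding mem_ecut by blast
  then have "a \<in> e" "b \<in> e" "b \<notin> V1" "a \<notin> V2"
    using shores_disjoint V1_eq V2_eq by auto
  then have "\<not> e \<subseteq> V1" "\<not> e \<subseteq> V2"
    by blast+
  with \<open>e \<in> edges W\<close> show "e \<in> insert {t1, t2} F"
    by (simp add: mem_F_iff)
qed

lemma xsum_ecut_shores:
  assumes "\<forall>e\<in>F. x e = 0"
  shows "xsum x (ecut U1 U2) = x {t1, t2}"
proof -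
  have "finite U1" "finite U2"
    using finite_W unfolding shores_cover[symmetric] by auto
  then have "finite (ecut U1 U2)"
    by (rule finite_ecut)
  moreover have "\<forall>e\<in>ecut U1 U2 - {{t1, t2}}. x e = 0"
    using assms ecut_shores_subset by blast
  ultimately have "xsum x {{t1, t2}} = xsum x (ecut U1 U2)"
    using terminal_edge_in_ecut by (intro xsum_mono_neutral) auto
  then show ?thesis
    by (simp add: xsum_def)
qed

lemma delta_subset_shore_cut:
  assumes "S \<subseteq> V1"
  shows "delta W S \<subseteq> ecut S (V1 - S) \<union> F"
proof
  fix e assume "e \<in> delta W S"
  moreover have "delta W S \<subseteq> edges W"
    using assms V1_subset_W by (intro delta_subset_edges) auto
  ultimately have "e \<in> edges W"
    by blast
  from \<open>e \<in> delta W S\<close> obtain a b where e: "e = {a, b}" "a \<in> S" "b \<in> W - S" "a \<noteq> b"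
    unfolding delta_def mem_ecut by blast
  show "e \<in> ecut S (V1 - S) \<union> F"
  proof (cases "b \<in> V1")
    case True
    then have "e \<in> ecut S (V1 - S)"
      unfolding mem_ecut using e by blast
    then show ?thesis ..
  next
    case False
    have "a \<in> e" "b \<in> e" "a \<in> V1"
      using e assms by auto
    then have "\<not> e \<subseteq> V1" "\<not> e \<subseteq> V2" "e \<noteq> {t1, t2}"
      using False parts_disjoint by auto
    then show ?thesis
      using \<open>e \<in> edges W\<close> by (simp add: mem_F_iff)
  qed
qed

lemma shore_cut_subset_delta: "S \<subseteq> W \<Longrightarrow> ecut S (V1 - S) \<subseteq> delta W S"
  unfolding delta_def using V1_subset_W by (simp add: Diff_mono ecut_mono)

lemma xsum_delta_eq_shore_cut:
  assumes "\<forall>e\<in>F. x e = 0" "S \<subseteq> V1"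
  shows "xsum x (delta W S) = xsum x (ecut S (V1 - S))"
proof (rule xsum_mono_neutral[symmetric])
  show "finite (delta W S)"
    using assms(2) V1_subset_W finite_W by (intro finite_delta) auto
  show "ecut S (V1 - S) \<subseteq> delta W S"
    using assms(2) V1_subset_W by (intro shore_cut_subset_delta) auto
  show "\<forall>e\<in>delta W S - ecut S (V1 - S). x e = 0"
    using assms delta_subset_shore_cut by blast
qed

lemma shore_cut_of_cut:
  assumes cuts: "\<forall>S. S \<subseteq> W \<and> odd (card (S \<inter> T)) \<longrightarrow> 1 \<le> xsum x (delta W S)"
    and "\<forall>e\<in>F. x e = 0" "S \<subseteq> V1" "odd (card (T1 \<inter> S))"
  shows "1 \<le> xsum x (ecut S (V1 - S))"
proof -
  have "S \<inter> T = T1 \<inter> S"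
    using assms(3) V1_eq T1_eq by blast
  then have "1 \<le> xsum x (delta W S)"
    using cuts assms(3,4) V1_subset_W by auto
  then show ?thesis
    using xsum_delta_eq_shore_cut assms(2,3) by simp
qed

lemma odd_cut_meets_shore:
  assumes "t1 \<in> S \<longleftrightarrow> t2 \<in> S" "odd (card (S \<inter> T))"
  shows "odd (card (T1 \<inter> S)) \<or> odd (card (T2 \<inter> S))"
proof -
  have fin: "finite (T \<inter> U1)" "finite (T \<inter> U2)"
    using finite_subset[OF T_subset_W finite_W] by simp_all
  have "S \<inter> T = (T \<inter> U1) \<inter> S \<union> (T \<inter> U2) \<inter> S"
    using T_subset_W shores_cover by blast
  then have "card (S \<inter> T) = card ((T \<inter> U1) \<inter> S) + card ((T \<inter> U2) \<inter> S)"
    using fin shores_disjoint by (simp add: card_Un_disjoint disjoint_iff)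
  also have "\<dots> = card (T1 \<inter> S) + of_bool (t1 \<in> S) + (card (T2 \<inter> S) + of_bool (t2 \<in> S))"
    using card_Int_remove[OF fin(1), of t1 S] card_Int_remove[OF fin(2), of t2 S]
      t1_mem t2_mem T1_eq T2_eq by simp
  finally show ?thesis
    using assms by (cases "t1 \<in> S") auto
qed

lemma cut_of_odd_shore_cut:
  assumes nonneg: "\<forall>e\<in>edges W. 0 \<le> x e"
    and shore_cuts: "\<forall>S1. S1 \<subseteq> V1 \<and> odd (card (T1 \<inter> S1)) \<longrightarrow> 1 \<le> xsum x (ecut S1 (V1 - S1))"
    and "S \<subseteq> W" "odd (card (T1 \<inter> S))"
  shows "1 \<le> xsum x (delta W S)"
proof -
  have "T1 \<inter> (S \<inter> V1) = T1 \<inter> S"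
    using T1_eq V1_eq by blast
  then have "1 \<le> xsum x (ecut (S \<inter> V1) (V1 - S \<inter> V1))"
    using shore_cuts assms(4) by simp
  also have "\<dots> \<le> xsum x (delta W S)"
    using V1_subset_W unfolding delta_def
    by (intro xsum_le_delta[unfolded delta_def] finite_W assms(3) nonneg ecut_mono) auto
  finally show ?thesis .
qed

lemma terminal_edge_in_delta:
  assumes "S \<subseteq> W" "\<not> (t1 \<in> S \<longleftrightarrow> t2 \<in> S)"
  shows "{t1, t2} \<in> delta W S"
proof (cases "t1 \<in> S")
  case True
  then show ?thesis
    using assms t2_mem shores_cover t1_neq_t2 unfolding delta_def mem_ecut by blast
next
  case False
  then have "\<exists>a b. {t1, t2} = {a, b} \<and> a \<in> S \<and> b \<in> W - S \<and> a \<noteq> b"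
    using assms t1_mem shores_cover t1_neq_t2 by (intro exI[of _ t2] exI[of _ t1]) auto
  then show ?thesis
    unfolding delta_def mem_ecut .
qed

end

context shore_split
begin

interpretation swap: shore_split W T U2 U1 V2 V1 T2 T1 t2 t1 F
  by (rule swap_shores)

lemma terminal_edge_notin_edges_V2: "{t1, t2} \<notin> edges V2"
  using swap.terminal_edge_notin_edges_V1 by (simp add: insert_commute)

lemma cut_of_shore_cuts:
  assumes nonneg: "\<forall>e\<in>edges W. 0 \<le> x e" and terminal: "x {t1, t2} = 1"
    and cuts1: "\<forall>S1. S1 \<subseteq> V1 \<and> odd (card (T1 \<inter> S1)) \<longrightarrow> 1 \<le> xsum x (ecut S1 (V1 - S1))"
    and cuts2: "\<forall>S2. S2 \<subseteq> V2 \<and> odd (card (T2 \<inter> S2)) \<longrightarrow> 1 \<le> xsum x (ecut S2 (V2 - S2))"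
    and "S \<subseteq> W" "odd (card (S \<inter> T))"
  shows "1 \<le> xsum x (delta W S)"
proof (cases "t1 \<in> S \<longleftrightarrow> t2 \<in> S")
  case True
  then consider "odd (card (T1 \<inter> S))" | "odd (card (T2 \<inter> S))"
    using odd_cut_meets_shore assms(6) by blast
  then show ?thesis
    using cut_of_odd_shore_cut[OF nonneg cuts1 assms(5)]
      swap.cut_of_odd_shore_cut[OF nonneg cuts2 assms(5)]
    by cases
next
  case False
  then have "xsum x {{t1, t2}} \<le> xsum x (delta W S)"
    using terminal_edge_in_delta assms(5) by (intro xsum_le_delta finite_W nonneg) auto
  then show ?thesis
    using terminal by (simp add: xsum_def)
qed

definition split_polyhedron :: "(nat set \<Rightarrow> real) set" where
  "split_polyhedron = {x \<in> vecs W. (\<forall>e\<in>edges W. 0 \<le> x e) \<and> x {t1, t2} = 1 \<and> (\<forall>e\<in>F. x e = 0)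
     \<and> (\<forall>S1. S1 \<subseteq> V1 \<and> odd (card (T1 \<inter> S1)) \<longrightarrow> 1 \<le> xsum x (ecut S1 (V1 - S1)))
     \<and> (\<forall>S2. S2 \<subseteq> V2 \<and> odd (card (T2 \<inter> S2)) \<longrightarrow> 1 \<le> xsum x (ecut S2 (V2 - S2)))}"

lemma face_eq_split_polyhedron:
  "{x \<in> dom_Tjoin W T. xsum x (ecut U1 U2) = 1 \<and> (\<forall>e\<in>F. x e = 0)} = split_polyhedron"
proof (intro equalityI subsetI)
  fix x assume "x \<in> {x \<in> dom_Tjoin W T. xsum x (ecut U1 U2) = 1 \<and> (\<forall>e\<in>F. x e = 0)}"
  then have x: "x \<in> vecs W" "\<forall>e\<in>edges W. 0 \<le> x e"
      "\<forall>S. S \<subseteq> W \<and> odd (card (S \<inter> T)) \<longrightarrow> 1 \<le> xsum x (delta W S)"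
      "xsum x (ecut U1 U2) = 1" "\<forall>e\<in>F. x e = 0"
    by (auto simp: dom_Tjoin_def)
  then show "x \<in> split_polyhedron"
    using xsum_ecut_shores shore_cut_of_cut[OF x(3,5)] swap.shore_cut_of_cut[OF x(3,5)]
    by (simp add: split_polyhedron_def)
next
  fix x assume "x \<in> split_polyhedron"
  then show "x \<in> {x \<in> dom_Tjoin W T. xsum x (ecut U1 U2) = 1 \<and> (\<forall>e\<in>F. x e = 0)}"
    using cut_of_shore_cuts xsum_ecut_shores by (auto simp: split_polyhedron_def dom_Tjoin_def)
qed

lemma restrict_edges_glue_shores:
  assumes "y1 \<in> vecs V1" "y2 \<in> vecs V2"
  shows "restrict_edges V1 (glue {t1, t2} y1 y2) = y1" "restrict_edges V2 (glue {t1, t2} y1 y2) = y2"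
proof -
  have "\<forall>e\<in>edges V1. y2 e = 0" "\<forall>e\<in>edges V2. y1 e = 0"
    using assms edges_V1_V2_disjoint swap.edges_V1_V2_disjoint by (auto simp: vecs_def)
  then show "restrict_edges V1 (glue {t1, t2} y1 y2) = y1" "restrict_edges V2 (glue {t1, t2} y1 y2) = y2"
    using assms terminal_edge_notin_edges_V1 terminal_edge_notin_edges_V2
    by (simp_all add: restrict_edges_glue)
qed

lemma glue_restrict_edges:
  assumes "x \<in> vecs W" "x {t1, t2} = 1" "\<forall>e\<in>F. x e = 0"
  shows "glue {t1, t2} (restrict_edges V1 x) (restrict_edges V2 x) = x"
proof
  fix e
  show "glue {t1, t2} (restrict_edges V1 x) (restrict_edges V2 x) e = x e"
  proof (cases "e \<in> edges W")
    case True
    then show ?thesis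
    proof (cases rule: edges_W_cases)
      case 1
      then show ?thesis
        using edges_V1_V2_disjoint terminal_edge_notin_edges_V1
        by (auto simp: glue_def restrict_edges_def)
    next
      case 2
      then show ?thesis
        using swap.edges_V1_V2_disjoint terminal_edge_notin_edges_V2
        by (auto simp: glue_def restrict_edges_def)
    next
      case 3
      then show ?thesis
        using assms(2) terminal_edge_notin_edges_V1 terminal_edge_notin_edges_V2
        by (auto simp: glue_def restrict_edges_def)
    next
      case 4
      then show ?thesis
        using assms(3) F_disjoint_edges_V1 swap.F_disjoint_edges_V1 terminal_edge_notin_F
        by (auto simp: glue_def restrict_edges_def)
    qed
  next
    case False
    then have "e \<notin> edges V1" "e \<notin> edges V2" "e \<noteq> {t1, t2}"
      using edges_mono[OF V1_subset_W] edges_mono[OF swap.V1_subset_W] terminal_edge_in_edges by auto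
    then show ?thesis
      using assms(1) False by (simp add: glue_def restrict_edges_def vecs_def)
  qed
qed

lemma glue_mem_split_polyhedron:
  assumes y1: "y1 \<in> dom_Tjoin V1 T1" and y2: "y2 \<in> dom_Tjoin V2 T2"
  shows "glue {t1, t2} y1 y2 \<in> split_polyhedron"
proof -
  let ?x = "glue {t1, t2} y1 y2"
  have vecs: "y1 \<in> vecs V1" "y2 \<in> vecs V2"
    using y1 y2 by (simp_all add: dom_Tjoin_def)
  have "?x \<in> vecs W"
    unfolding vecs_def
  proof (intro CollectI allI impI)
    fix e assume "e \<notin> edges W"
    then have "e \<notin> edges V1" "e \<notin> edges V2" "e \<noteq> {t1, t2}"
      using edges_mono[OF V1_subset_W] edges_mono[OF swap.V1_subset_W] terminal_edge_in_edges by auto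
    then show "?x e = 0"
      using vecs by (simp add: glue_eq_0)
  qed
  moreover have "\<forall>e\<in>edges W. 0 \<le> ?x e"
    using dom_Tjoin_nonneg[OF y1] dom_Tjoin_nonneg[OF y2] by (simp add: glue_def)
  moreover have "?x {t1, t2} = 1"
    using vecs terminal_edge_notin_edges_V1 terminal_edge_notin_edges_V2
    by (simp add: glue_def vecs_def)
  moreover have "\<forall>e\<in>F. ?x e = 0"
    using vecs F_disjoint_edges_V1 swap.F_disjoint_edges_V1 terminal_edge_notin_F
    by (metis glue_eq_0)
  moreover have "restrict_edges V1 ?x \<in> dom_Tjoin V1 T1" "restrict_edges V2 ?x \<in> dom_Tjoin V2 T2"
    using y1 y2 restrict_edges_glue_shores[OF vecs] by simp_all
  ultimately show ?thesis
    unfolding split_polyhedron_def restrict_edges_in_dom_Tjoin_iff by blast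
qed

lemma split_polyhedron_eq_image:
  "split_polyhedron = case_prod (glue {t1, t2}) ` (dom_Tjoin V1 T1 \<times> dom_Tjoin V2 T2)"
proof (intro equalityI subsetI)
  fix x assume x: "x \<in> split_polyhedron"
  then have "restrict_edges V1 x \<in> dom_Tjoin V1 T1" "restrict_edges V2 x \<in> dom_Tjoin V2 T2"
    using edges_mono[OF V1_subset_W] edges_mono[OF swap.V1_subset_W]
    unfolding split_polyhedron_def restrict_edges_in_dom_Tjoin_iff by blast+
  moreover have "x = glue {t1, t2} (restrict_edges V1 x) (restrict_edges V2 x)"
    using x glue_restrict_edges by (simp add: split_polyhedron_def)
  ultimately show "x \<in> case_prod (glue {t1, t2}) ` (dom_Tjoin V1 T1 \<times> dom_Tjoin V2 T2)"
    by force
qed (auto intro: glue_mem_split_polyhedron)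

lemma inj_on_glue: "inj_on (case_prod (glue {t1, t2})) (dom_Tjoin V1 T1 \<times> dom_Tjoin V2 T2)"
  by (rule inj_on_inverseI[where g = "\<lambda>x. (restrict_edges V1 x, restrict_edges V2 x)"])
    (auto simp: restrict_edges_glue_shores dom_Tjoin_def)

end

theorem mainTheorem9:
  fixes n :: nat and T U1 U2 :: "nat set" and t1 t2 :: nat
  assumes "T \<subseteq> nodes n" and "even (card T)"
    and "U1 \<union> U2 = nodes n" and "U1 \<inter> U2 = {}"
    and "odd (card (T \<inter> U1))" and "odd (card (T \<inter> U2))"
    and "t1 \<in> T \<inter> U1" and "t2 \<in> T \<inter> U2"
  defines "V1 \<equiv> U1 - {t1}" and "V2 \<equiv> U2 - {t2}"
    and "T1 \<equiv> (T \<inter> U1) - {t1}" and "T2 \<equiv> (T \<inter> U2) - {t2}"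
    and "P \<equiv> {x \<in> dom_Tjoin (nodes n) T. xsum x (ecut U1 U2) = 1}"
    and "Q \<equiv> {x \<in> dom_Tjoin (nodes n) T. xsum x (ecut U1 U2) = 1 \<and> (\<forall>e\<in>Fset U1 U2 t1 t2. x e = 0)}"
  shows "is_face (edges (nodes n)) Q P
    \<and> Q = {x \<in> vecs (nodes n). (\<forall>e\<in>edges (nodes n). x e \<ge> 0) \<and> x {t1, t2} = 1
            \<and> (\<forall>e\<in>Fset U1 U2 t1 t2. x e = 0)
            \<and> (\<forall>S1. S1 \<subseteq> V1 \<and> odd (card (T1 \<inter> S1)) \<longrightarrow> xsum x (ecut S1 (V1 - S1)) \<ge> 1)
            \<and> (\<forall>S2. S2 \<subseteq> V2 \<and> odd (card (T2 \<inter> S2)) \<longrightarrow> xsum x (ecut S2 (V2 - S2)) \<ge> 1)}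
    \<and> Q = (\<lambda>(y1, y2). (\<lambda>e. y1 e + y2 e + (if e = {t1, t2} then 1 else 0)))
            ` (dom_Tjoin V1 T1 \<times> dom_Tjoin V2 T2)
    \<and> inj_on (\<lambda>(y1, y2). (\<lambda>e. y1 e + y2 e + (if e = {t1, t2} then 1 else 0)))
            (dom_Tjoin V1 T1 \<times> dom_Tjoin V2 T2)"
proof -
  interpret shore_split "nodes n" T U1 U2 V1 V2 T1 T2 t1 t2 "Fset U1 U2 t1 t2"
    by unfold_locales (use assms(1,3,4,7,8) in \<open>auto simp: nodes_def V1_def V2_def T1_def T2_def\<close>)
  have "\<forall>x\<in>P. \<forall>e\<in>Fset U1 U2 t1 t2. 0 \<le> x e"
    using F_subset_edges by (auto simp: P_def dom_Tjoin_def)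
  then have "is_face (edges (nodes n)) {x \<in> P. \<forall>e\<in>Fset U1 U2 t1 t2. x e = 0} P"
    by (intro is_face_vanishing finite_edges finite_W F_subset_edges)
  moreover have "{x \<in> P. \<forall>e\<in>Fset U1 U2 t1 t2. x e = 0} = Q"
    by (auto simp: P_def Q_def)
  moreover have "(\<lambda>(y1, y2). (\<lambda>e. y1 e + y2 e + (if e = {t1, t2} then 1 else 0))) = case_prod (glue {t1, t2})"
    by (auto simp: glue_def fun_eq_iff)
  ultimately show ?thesis
    using face_eq_split_polyhedron split_polyhedron_eq_image inj_on_glue
    unfolding Q_def split_polyhedron_def by simp
qed

end
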